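(* Let $w/u$ be a skew partition of length $r$, $v$ a partition, and $c=(c_1,c_2'):\mathcal D(w/u)\to Y(v)$ a bijection such that (Y) for every $x\in\mathcal D(w/u)$ the set $C(x)=\{c(y): y\le_{LR}x\}$ is a Young diagram, and $c_1$ satisfies (L1) $c_1(i,j)<c_1(i',j)$ whenever $(i,j),(i',j)\in\mathcal D(w/u)$, $i<i'$, and (L2) $c_1(i,j)\le c_1(i,j')$ whenever $(i,j),(i,j')\in\mathcal D(w/u)$, $j<j'$. Then $c_1$ also satisfies (L3): for all $x\in\mathcal D(w/u)$ and $k\in\mathbb N^*$, $\sigma_k(x)\ge\sigma_{k+1}(x)$ where $\sigma_k(x)=\operatorname{card}\{y\le_{LR}x: c_1(y)=k\}$; and moreover $c_2'=c_2$, where $c_2(x)=\operatorname{card}\{y\le_{LR}x: c_1(y)=c_1(x)\}$.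
   Context: A generalized partition of length $r$ is a weakly decreasing integer sequence $u=(u_1,\dots,u_r)$, with $\mathcal D(u)=\{(i,j)\in\{1,\dots,r\}\times\mathbb Z: j\le u_i\}$; a skew partition $w/u$ means $\mathcal D(u)\subset\mathcal D(w)$, $\mathcal D(w/u)=\mathcal D(w)\setminus\mathcal D(u)$. For a partition $v$, $Y(v)=\{(i,j): i\ge1,\ 1\le j\le v_i\}$; a Young diagram is a set of the form $Y(\mu)$ for a partition $\mu$. The LR order on $\mathcal D(w/u)$ is the total order with $(i,j)<_{LR}(i',j')$ if $i<i'$, and $(i,j)<_{LR}(i,j')$ if $j>j'$. *)

theory Defs
  imports Main
begin

definition gen_partition :: "nat \<Rightarrow> (nat \<Rightarrow> int) \<Rightarrow> bool" where
  "gen_partition r u \<longleftrightarrow> (\<forall>i. 1 \<le> i \<and> i < r \<longrightarrow> u (Suc i) \<le> u i)"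

definition Dg :: "nat \<Rightarrow> (nat \<Rightarrow> int) \<Rightarrow> (nat \<times> int) set" where
  "Dg r u = {(i, j). 1 \<le> i \<and> i \<le> r \<and> j \<le> u i}"

definition skew_partition :: "nat \<Rightarrow> (nat \<Rightarrow> int) \<Rightarrow> (nat \<Rightarrow> int) \<Rightarrow> bool" where
  "skew_partition r w u \<longleftrightarrow> gen_partition r w \<and> gen_partition r u \<and> Dg r u \<subseteq> Dg r w"

definition Dskew :: "nat \<Rightarrow> (nat \<Rightarrow> int) \<Rightarrow> (nat \<Rightarrow> int) \<Rightarrow> (nat \<times> int) set" where
  "Dskew r w u = Dg r w - Dg r u"

text \<open>A partition: weakly decreasing sequence of naturals v_1 >= v_2 >= ... , finitely
  many nonzero (index 0 is ignored).\<close>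
definition partition :: "(nat \<Rightarrow> nat) \<Rightarrow> bool" where
  "partition v \<longleftrightarrow> (\<forall>i\<ge>1. v (Suc i) \<le> v i) \<and> (\<exists>N. \<forall>i\<ge>N. v i = 0)"

definition Y :: "(nat \<Rightarrow> nat) \<Rightarrow> (nat \<times> nat) set" where
  "Y v = {(i, j). 1 \<le> i \<and> 1 \<le> j \<and> j \<le> v i}"

definition young_diagram :: "(nat \<times> nat) set \<Rightarrow> bool" where
  "young_diagram S \<longleftrightarrow> (\<exists>\<mu>. partition \<mu> \<and> S = Y \<mu>)"

definition lr_less :: "nat \<times> int \<Rightarrow> nat \<times> int \<Rightarrow> bool" where
  "lr_less x y \<longleftrightarrow> fst x < fst y \<or> (fst x = fst y \<and> snd x > snd y)"

definition lr_le :: "nat \<times> int \<Rightarrow> nat \<times> int \<Rightarrow> bool" where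
  "lr_le x y \<longleftrightarrow> x = y \<or> lr_less x y"

end

theory Submission
  imports Defs
begin

text \<open>Both claims are statements about the Young diagrams C(x). Row k+1 of a Young
  diagram is no longer than row k, which gives (L3). If c(x) = (k, m), then row k of C(x)
  is exactly {k} \<times> {1..m}: a cell (k, j) of C(x) with j > m is c(y) for some y <LR x,
  and since C(y) is a Young diagram it already contains (k, m) = c(x), contradicting
  injectivity of c. Hence the number of y \<le>LR x with c1(y) = k is m.\<close>

lemma young_diagram_finite:
  assumes "young_diagram S"
  shows "finite S"
proof -
  obtain \<mu> N where "S = Y \<mu>" and zero: "\<forall>i\<ge>N. \<mu> i = 0"
    using assms unfolding young_diagram_def partition_def by blast
  moreover have "i < N" if "1 \<le> j" "j \<le> \<mu> i" for i j
  proof (rule ccontr)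
    assume "\<not> i < N"
    then have "\<mu> i = 0"
      using zero by simp
    then show False
      using that by simp
  qed
  ultimately have "S \<subseteq> (SIGMA i:{..<N}. {..\<mu> i})"
    unfolding Y_def by auto
  then show ?thesis
    by (rule finite_subset) auto
qed

lemma young_diagram_cell_ge_1:
  assumes "young_diagram S" "(i, j) \<in> S"
  shows "1 \<le> i" "1 \<le> j"
  using assms unfolding young_diagram_def Y_def by auto

lemma young_diagram_row_closed:
  assumes "young_diagram S" "(i, j) \<in> S" "1 \<le> j'" "j' \<le> j"
  shows "(i, j') \<in> S"
  using assms unfolding young_diagram_def Y_def by auto

lemma young_diagram_col_closed:
  assumes "young_diagram S" "(Suc i, j) \<in> S" "1 \<le> i"
  shows "(i, j) \<in> S"
proof -
  obtain \<mu> where "partition \<mu>" and S: "S = Y \<mu>"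
    using assms(1) unfolding young_diagram_def by auto
  then have "\<mu> (Suc i) \<le> \<mu> i"
    using assms(3) unfolding partition_def by auto
  then show ?thesis
    using assms(2,3) S unfolding Y_def by auto
qed

lemma young_diagram_card_row_Suc_le:
  assumes "young_diagram S" "1 \<le> k"
  shows "card {p \<in> S. fst p = Suc k} \<le> card {p \<in> S. fst p = k}"
proof (rule card_inj_on_le)
  show "inj_on (\<lambda>(i, j). (i - 1, j)) {p \<in> S. fst p = Suc k}"
    by (auto simp: inj_on_def)
  show "(\<lambda>(i, j). (i - 1, j)) ` {p \<in> S. fst p = Suc k} \<subseteq> {p \<in> S. fst p = k}"
    using young_diagram_col_closed[OF assms(1) _ assms(2)] by auto
  show "finite {p \<in> S. fst p = k}"
    using young_diagram_finite[OF assms(1)] by simp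
qed

lemma lr_le_refl: "lr_le x x"
  unfolding lr_le_def by simp

lemma lr_le_antisym: "lr_le x y \<Longrightarrow> lr_le y x \<Longrightarrow> x = y"
  unfolding lr_le_def lr_less_def by auto

definition lr_prefix_image :: "(nat \<times> int \<Rightarrow> 'a) \<Rightarrow> (nat \<times> int) set \<Rightarrow> nat \<times> int \<Rightarrow> 'a set" where
  "lr_prefix_image c D x = c ` {y \<in> D. lr_le y x}"

lemma card_lr_prefix_filter:
  assumes "inj_on c D"
  shows "card {y \<in> D. lr_le y x \<and> P (c y)} = card {p \<in> lr_prefix_image c D x. P p}"
proof -
  have "{p \<in> lr_prefix_image c D x. P p} = c ` {y \<in> D. lr_le y x \<and> P (c y)}"
    unfolding lr_prefix_image_def by auto
  moreover have "inj_on c {y \<in> D. lr_le y x \<and> P (c y)}"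
    using assms by (rule inj_on_subset) auto
  ultimately show ?thesis
    by (simp add: card_image)
qed

lemma lr_prefix_image_row:
  assumes inj: "inj_on c D"
    and young: "\<forall>y\<in>D. young_diagram (lr_prefix_image c D y)"
    and x: "x \<in> D" and cx: "c x = (k, m)"
  shows "{p \<in> lr_prefix_image c D x. fst p = k} = {k} \<times> {1..m}"
proof -
  have self: "c y \<in> lr_prefix_image c D y" if "y \<in> D" for y
    using that lr_le_refl unfolding lr_prefix_image_def by blast
  have m: "1 \<le> m"
    using young_diagram_cell_ge_1(2)[of "lr_prefix_image c D x" k m] young x self[OF x] cx by simp
  have "j \<le> m" if j: "(k, j) \<in> lr_prefix_image c D x" for j
  proof (rule ccontr)
    assume "\<not> j \<le> m"
    obtain y where y: "y \<in> D" "lr_le y x" "c y = (k, j)"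
      using j unfolding lr_prefix_image_def by auto
    have "(k, m) \<in> lr_prefix_image c D y"
      using young_diagram_row_closed[of _ k j m] young y self[OF y(1)] m \<open>\<not> j \<le> m\<close> by simp
    then obtain z where z: "z \<in> D" "lr_le z y" "c z = c x"
      using cx unfolding lr_prefix_image_def by auto
    then have "z = x"
      using inj x by (auto dest: inj_onD)
    then have "y = x"
      using z(2) y(2) by (simp add: lr_le_antisym)
    then show False
      using y(3) cx \<open>\<not> j \<le> m\<close> by simp
  qed
  moreover have "(k, j) \<in> lr_prefix_image c D x" if "1 \<le> j" "j \<le> m" for j
    using young_diagram_row_closed[of _ k m j] young x self[OF x] cx that by simp
  ultimately show ?thesis
    using young_diagram_cell_ge_1(2) young x by fastforce
qed

theorem lemma4p8:
  fixes r :: nat and w u :: "nat \<Rightarrow> int" and v :: "nat \<Rightarrow> nat"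
    and c :: "nat \<times> int \<Rightarrow> nat \<times> nat"
  assumes skew: "skew_partition r w u"
    and part: "partition v"
    and bij: "bij_betw c (Dskew r w u) (Y v)"
    and Ycond: "\<forall>x\<in>Dskew r w u. young_diagram {c y | y. y \<in> Dskew r w u \<and> lr_le y x}"
    and L1: "\<forall>i i' j. (i, j) \<in> Dskew r w u \<longrightarrow> (i', j) \<in> Dskew r w u \<longrightarrow> i < i'
               \<longrightarrow> fst (c (i, j)) < fst (c (i', j))"
    and L2: "\<forall>i j j'. (i, j) \<in> Dskew r w u \<longrightarrow> (i, j') \<in> Dskew r w u \<longrightarrow> j < j'
               \<longrightarrow> fst (c (i, j)) \<le> fst (c (i, j'))"
  shows "(\<forall>x\<in>Dskew r w u. \<forall>k::nat. k \<ge> 1 \<longrightarrow>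
            card {y \<in> Dskew r w u. lr_le y x \<and> fst (c y) = k}
              \<ge> card {y \<in> Dskew r w u. lr_le y x \<and> fst (c y) = k + 1})
      \<and> (\<forall>x\<in>Dskew r w u.
            snd (c x) = card {y \<in> Dskew r w u. lr_le y x \<and> fst (c y) = fst (c x)})"
proof -
  \<comment> \<open>Only injectivity of c and (Y) are needed; (L1), (L2) and the shapes of w/u and v are not.\<close>
  define D where "D = Dskew r w u"
  have inj: "inj_on c D"
    using bij unfolding D_def by (rule bij_betw_imp_inj_on)
  have "{c y | y. y \<in> D \<and> lr_le y x} = lr_prefix_image c D x" for x
    unfolding lr_prefix_image_def by auto
  then have young: "\<forall>x\<in>D. young_diagram (lr_prefix_image c D x)"
    using Ycond unfolding D_def by metis
  have "card {y \<in> D. lr_le y x \<and> fst (c y) = Suc k} \<le> card {y \<in> D. lr_le y x \<and> fst (c y) = k}"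
    if "x \<in> D" "1 \<le> k" for x k
    using young_diagram_card_row_Suc_le[of "lr_prefix_image c D x" k] young that
      card_lr_prefix_filter[OF inj, of x "\<lambda>p. fst p = k"]
      card_lr_prefix_filter[OF inj, of x "\<lambda>p. fst p = Suc k"]
    by simp
  moreover have "snd (c x) = card {y \<in> D. lr_le y x \<and> fst (c y) = fst (c x)}" if "x \<in> D" for x
    using lr_prefix_image_row[OF inj young that, of "fst (c x)" "snd (c x)"]
      card_lr_prefix_filter[OF inj, of x "\<lambda>p. fst p = fst (c x)"]
    by simp
  ultimately show ?thesis
    unfolding D_def by simp
qed

end
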